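(* Let $\epsilon>0$, $\delta\ge 0$, $\alpha\in(0,1)$, $0<\theta_0<\theta_1<1$ and $n\ge1$ be given. Observe $X\sim\mathrm{Binom}(n,\theta)$, where $\theta$ is unknown. Set $b=e^{-\epsilon}$ and $q=\frac{2\delta b}{1-b+2\delta b}$. Define $\phi^*:\mathbb{Z}\to[0,1]$ by $\phi^*_x=F_N(x-m)$, where $N\sim\mathrm{Tulap}(0,b,q)$ and $m\in\mathbb{R}$ is chosen such that $\mathbb{E}_{\theta_0}\phi^*_X=\alpha$. Then $\phi^*$ is the uniformly most powerful level-$\alpha$ test of $H_0:\theta=\theta_0$ versus $H_1:\theta=\theta_1$ among $\mathscr D^n_{\epsilon,\delta}$.
   Context: Nearest integer function: for $t\in\mathbb{R}$, $[t]$ is the integer nearest to $t$, where for $z\in\mathbb{Z}$, $[z+1/2]$ is defined to be the nearest even integer. Tulap distribution: for $m\in\mathbb{R}$, $b\in(0,1)$, $q\in[0,1)$, $N_0\sim\mathrm{Tulap}(m,b,0)$ has cdf $F_{N_0}(x)=\frac{b^{-[x-m]}}{1+b}\big(b+(x-m-[x-m]+\tfrac12)(1-b)\big)$ for $x\leq [m]$ and $F_{N_0}(x)=1-\frac{b^{[x-m]}}{1+b}\big(b+([x-m]-(x-m)+\tfrac12)(1-b)\big)$ for $x>[m]$; and $N\sim \mathrm{Tulap}(m,b,q)$ has cdf $F_N(x)=\frac{F_{N_0}(x)-q/2}{1-q}\,I\{q/2\leq F_{N_0}(x)\leq 1-q/2\}+I\{F_{N_0}(x)>1-q/2\}$. A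 (randomized) test is a function $\phi:\{0,1,\dots,n\}\to[0,1]$, $\phi_x$ being the probability of rejecting $H_0$ when $X=x$; its power at $\theta$ is $\mathbb{E}_\theta\phi_X$. For $\epsilon>0,\delta\ge 0$, $\mathscr D^n_{\epsilon,\delta}$ is the set of tests $\phi$ such that for all $x\in\{0,\dots,n-1\}$: $\phi_x\le e^\epsilon\phi_{x+1}+\delta$, $\phi_{x+1}\le e^\epsilon\phi_x+\delta$, $1-\phi_x\le e^\epsilon(1-\phi_{x+1})+\delta$, $1-\phi_{x+1}\le e^\epsilon(1-\phi_x)+\delta$. A test $\phi^*\in\Phi$ is uniformly most powerful (UMP) at level $\alpha$ among $\Phi$ if $\sup_{\theta\in\Theta_0}\mathbb{E}_\theta\phi^*\le\alpha$ and for every $\phi\in\Phi$ with $\sup_{\theta\in\Theta_0}\mathbb{E}_\theta\phi\le\alpha$, $\mathbb{E}_\theta\phi^*\ge\mathbb{E}_\theta\phi$ for all $\theta$ in the alternative. *)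

theory Defs
  imports Complex_Main
begin

definition nearest_int :: "real \<Rightarrow> int" where
  "nearest_int t =
     (if t - of_int \<lfloor>t\<rfloor> = 1/2
      then (if even \<lfloor>t\<rfloor> then \<lfloor>t\<rfloor> else \<lfloor>t\<rfloor> + 1)
      else \<lfloor>t + 1/2\<rfloor>)"

definition tulap0_cdf :: "real \<Rightarrow> real \<Rightarrow> real \<Rightarrow> real" where
  "tulap0_cdf m b x =
     (if x \<le> of_int (nearest_int m)
      then b powi (- nearest_int (x - m)) / (1 + b)
             * (b + (x - m - of_int (nearest_int (x - m)) + 1/2) * (1 - b))
      else 1 - b powi (nearest_int (x - m)) / (1 + b)
             * (b + (of_int (nearest_int (x - m)) - (x - m) + 1/2) * (1 - b)))"

definition tulap_cdf :: "real \<Rightarrow> real \<Rightarrow> real \<Rightarrow> real \<Rightarrow> real" where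
  "tulap_cdf m b q x =
     (let F = tulap0_cdf m b x in
       (if q/2 \<le> F \<and> F \<le> 1 - q/2 then (F - q/2) / (1 - q) else 0)
       + (if F > 1 - q/2 then 1 else 0))"

definition is_test :: "nat \<Rightarrow> (nat \<Rightarrow> real) \<Rightarrow> bool" where
  "is_test n \<phi> \<longleftrightarrow> (\<forall>x\<le>n. 0 \<le> \<phi> x \<and> \<phi> x \<le> 1)"

definition binom_power :: "nat \<Rightarrow> real \<Rightarrow> (nat \<Rightarrow> real) \<Rightarrow> real" where
  "binom_power n \<theta> \<phi> = (\<Sum>x\<le>n. real (n choose x) * \<theta> ^ x * (1 - \<theta>) ^ (n - x) * \<phi> x)"

definition DP_tests :: "nat \<Rightarrow> real \<Rightarrow> real \<Rightarrow> (nat \<Rightarrow> real) set" where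
  "DP_tests n \<epsilon> \<delta> = {\<phi>. is_test n \<phi> \<and> (\<forall>x<n.
       \<phi> x \<le> exp \<epsilon> * \<phi> (x+1) + \<delta> \<and>
       \<phi> (x+1) \<le> exp \<epsilon> * \<phi> x + \<delta> \<and>
       1 - \<phi> x \<le> exp \<epsilon> * (1 - \<phi> (x+1)) + \<delta> \<and>
       1 - \<phi> (x+1) \<le> exp \<epsilon> * (1 - \<phi> x) + \<delta>)}"

definition UMP_simple :: "nat \<Rightarrow> real \<Rightarrow> real \<Rightarrow> real \<Rightarrow> (nat \<Rightarrow> real) set \<Rightarrow> (nat \<Rightarrow> real) \<Rightarrow> bool" where
  "UMP_simple n \<theta>0 \<theta>1 \<alpha> \<Phi> \<phi>s \<longleftrightarrow>
     \<phi>s \<in> \<Phi> \<and> binom_power n \<theta>0 \<phi>s \<le> \<alpha> \<and>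
     (\<forall>\<phi>\<in>\<Phi>. binom_power n \<theta>0 \<phi> \<le> \<alpha> \<longrightarrow> binom_power n \<theta>1 \<phi>s \<ge> binom_power n \<theta>1 \<phi>)"

end

theory Submission
  imports Defs
begin

(* With b = exp (-eps), the four (eps, delta)-DP constraints between x and x + 1 say exactly that
   phi (x + 1) <= c (phi x) and phi x <= c (phi (x + 1)) for the increasing map c = dp_cap b delta.
   The Tulap(0, b, 0) cdf G obeys G (t + 1) = min (G t / b) (1 - b + b G t), and the choice of q
   turns the truncated cdf F of Tulap(0, b, q) into a solution of F (t + 1) = c (F t) wherever
   F t > 0: the test x |-> F (x - m) increases as fast as the DP constraints allow. So a DP test
   that drops below it at some x stays below it from x on, and since the binomial likelihood
   ratio is increasing in x, a DP test of size at most alpha has power at most that of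
   F (x - m) (the Karlin-Rubin argument). A shift m of exact size alpha exists by continuity of F
   and the intermediate value theorem. *)

section \<open>The Tulap cdf\<close>

lemma nearest_int_dist: "\<bar>t - of_int (nearest_int t)\<bar> \<le> 1/2"
proof (cases "t - of_int \<lfloor>t\<rfloor> = 1/2")
  case True
  then show ?thesis unfolding nearest_int_def by auto
next
  case False
  then have "nearest_int t = \<lfloor>t + 1/2\<rfloor>" unfolding nearest_int_def by simp
  then show ?thesis by linarith
qed

lemma int_plus_half_cases:
  fixes t :: real
  obtains k r where "\<bar>r\<bar> \<le> 1/2" "t = of_int k + r"
  using nearest_int_dist[of t] by (metis add.commute diff_add_cancel)

definition tulap_cell :: "real \<Rightarrow> real \<Rightarrow> real" where
  "tulap_cell b r = (b + (r + 1/2) * (1 - b)) / (1 + b)"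

definition tulap0_piece :: "real \<Rightarrow> int \<Rightarrow> real \<Rightarrow> real" where
  "tulap0_piece b k r =
     (if k \<le> 0 then b ^ nat (-k) * tulap_cell b r else 1 - b ^ nat k * (1 - tulap_cell b r))"

lemma tulap_cell_bounds:
  assumes "0 < b" "b < 1" "\<bar>r\<bar> \<le> 1/2"
  shows "b / (1 + b) \<le> tulap_cell b r" "tulap_cell b r \<le> 1 / (1 + b)"
proof -
  have "0 \<le> (r + 1/2) * (1 - b)" "(r + 1/2) * (1 - b) \<le> 1 - b"
    using assms by (auto intro: mult_left_le_one_le)
  then have "b \<le> b + (r + 1/2) * (1 - b)" "b + (r + 1/2) * (1 - b) \<le> 1" by linarith+
  then show "b / (1 + b) \<le> tulap_cell b r" "tulap_cell b r \<le> 1 / (1 + b)"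
    using assms unfolding tulap_cell_def by (auto intro: divide_right_mono)
qed

lemma tulap_cell_range:
  assumes "0 < b" "b < 1" "\<bar>r\<bar> \<le> 1/2"
  shows "0 \<le> tulap_cell b r" "tulap_cell b r \<le> 1"
proof -
  have "0 \<le> b / (1 + b)" "1 / (1 + b) \<le> 1" using assms by auto
  then show "0 \<le> tulap_cell b r" "tulap_cell b r \<le> 1"
    using tulap_cell_bounds[OF assms] by linarith+
qed

lemma tulap0_cdf_eq_piece:
  assumes "0 < b" "b < 1"
  shows "tulap0_cdf 0 b t = tulap0_piece b (nearest_int t) (t - of_int (nearest_int t))"
proof -
  define k where "k = nearest_int t"
  have G: "tulap0_cdf 0 b t =
     (if t \<le> 0 then b powi (- k) / (1 + b) * (b + (t - of_int k + 1/2) * (1 - b))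
      else 1 - b powi k / (1 + b) * (b + (of_int k - t + 1/2) * (1 - b)))"
    unfolding tulap0_cdf_def k_def by (simp add: nearest_int_def)
  have "\<bar>t - of_int k\<bar> \<le> 1/2" using nearest_int_dist k_def by blast
  then consider "t \<le> 0" "k \<le> 0" | "0 < t" "k = 0" | "0 < t" "0 < k" by linarith
  then show ?thesis
  proof cases
    case 1
    then show ?thesis using assms unfolding G tulap0_piece_def tulap_cell_def k_def[symmetric]
      by (simp add: power_int_def)
  next
    case 2
    then show ?thesis using assms unfolding G tulap0_piece_def tulap_cell_def k_def[symmetric]
      by (simp add: field_simps)
  next
    case 3
    then show ?thesis using assms unfolding G tulap0_piece_def tulap_cell_def k_def[symmetric]
      by (simp add: power_int_def field_simps)
  qed
qed

lemma tulap0_piece_tie: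
  assumes "0 < b" "b < 1"
  shows "tulap0_piece b (k + 1) (-1/2) = tulap0_piece b k (1/2)"
proof -
  consider "k \<le> -1" | "k = 0" | "k \<ge> 1" by linarith
  then show ?thesis
  proof cases
    case 1
    then have "nat (-k) = Suc (nat (-(k+1)))" by simp
    then show ?thesis using 1 assms unfolding tulap0_piece_def tulap_cell_def by (simp add: field_simps)
  next
    case 2
    then show ?thesis using assms unfolding tulap0_piece_def tulap_cell_def by (simp add: field_simps)
  next
    case 3
    then have "nat (k+1) = Suc (nat k)" by simp
    then show ?thesis using 3 assms unfolding tulap0_piece_def tulap_cell_def by (simp add: field_simps)
  qed
qed

lemma tulap0_cdf_int_plus:
  assumes "0 < b" "b < 1" "\<bar>r\<bar> \<le> 1/2"
  shows "tulap0_cdf 0 b (of_int k + r) = tulap0_piece b k r"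
proof -
  define k' where "k' = nearest_int (of_int k + r)"
  define r' where "r' = of_int k + r - of_int k'"
  have r': "\<bar>r'\<bar> \<le> 1/2" using nearest_int_dist r'_def k'_def by blast
  have G: "tulap0_cdf 0 b (of_int k + r) = tulap0_piece b k' r'"
    using tulap0_cdf_eq_piece[OF assms(1,2)] k'_def r'_def by simp
  have d: "of_int (k' - k) = r - r'" using r'_def by simp
  then have "\<bar>of_int (k' - k)\<bar> < (2::real)" using assms(3) r' by linarith
  then have "\<bar>k' - k\<bar> < 2" by linarith
  then consider "k' = k" | "k' = k + 1" | "k = k' + 1" by linarith
  then show ?thesis
  proof cases
    case 1
    then show ?thesis using G d by simp
  next
    case 2
    then have rr: "r = 1/2" "r' = -1/2" using d assms(3) r' by auto
    show ?thesis using G 2 tulap0_piece_tie[OF assms(1,2)] unfolding rr by simp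
  next
    case 3
    then have rr: "r = -1/2" "r' = 1/2" using d assms(3) r' by auto
    show ?thesis using G 3 tulap0_piece_tie[OF assms(1,2)] unfolding rr by simp
  qed
qed

lemma tulap0_cdf_range:
  assumes "0 < b" "b < 1"
  shows "0 \<le> tulap0_cdf 0 b t" "tulap0_cdf 0 b t \<le> 1"
proof -
  obtain k r where r: "\<bar>r\<bar> \<le> 1/2" and t: "t = of_int k + r" by (rule int_plus_half_cases)
  have c: "0 \<le> tulap_cell b r" "tulap_cell b r \<le> 1" using tulap_cell_range[OF assms r] by auto
  have p: "0 \<le> b ^ j" "b ^ j \<le> 1" for j using assms by (auto intro: power_le_one)
  have "0 \<le> tulap0_piece b k r \<and> tulap0_piece b k r \<le> 1"
    unfolding tulap0_piece_def using c p[of "nat (-k)"] p[of "nat k"]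
    by (auto intro: mult_le_one mult_left_le_one_le)
  then show "0 \<le> tulap0_cdf 0 b t" "tulap0_cdf 0 b t \<le> 1"
    unfolding t tulap0_cdf_int_plus[OF assms r] by auto
qed

lemma min_divide_affine_eq:
  fixes b g :: real
  assumes "0 < b" "b < 1"
  shows "g * (1 + b) \<le> b \<Longrightarrow> min (g / b) (1 - b + b * g) = g / b"
    and "b \<le> g * (1 + b) \<Longrightarrow> min (g / b) (1 - b + b * g) = 1 - b + b * g"
proof -
  have key: "b * (1 - b + b * g) - g = (1 - b) * (b - g * (1 + b))" by (simp add: algebra_simps)
  show "min (g / b) (1 - b + b * g) = g / b" if "g * (1 + b) \<le> b"
  proof -
    have "0 \<le> (1 - b) * (b - g * (1 + b))" using that assms by simp
    then have "g \<le> b * (1 - b + b * g)" using key by linarith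
    then show ?thesis using assms by (simp add: pos_divide_le_eq mult.commute)
  qed
  show "min (g / b) (1 - b + b * g) = 1 - b + b * g" if "b \<le> g * (1 + b)"
  proof -
    have "0 \<ge> (1 - b) * (b - g * (1 + b))" using that assms by (simp add: mult_nonneg_nonpos)
    then have "b * (1 - b + b * g) \<le> g" using key by linarith
    then show ?thesis using assms by (simp add: pos_le_divide_eq mult.commute)
  qed
qed

lemma tulap0_piece_succ:
  assumes "0 < b" "b < 1" "\<bar>r\<bar> \<le> 1/2"
  shows "tulap0_piece b (k + 1) r = min (tulap0_piece b k r / b) (1 - b + b * tulap0_piece b k r)"
proof -
  define g where "g = tulap0_piece b k r"
  note cell = tulap_cell_bounds[OF assms(1-3)] tulap_cell_range[OF assms(1-3)]
  have p: "0 \<le> b ^ j" "b ^ j \<le> 1" for j using assms by (auto intro: power_le_one)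
  consider "k \<le> -1" | "k = 0" | "k \<ge> 1" by linarith
  then have "tulap0_piece b (k + 1) r = min (g / b) (1 - b + b * g)"
  proof cases
    case 1
    define j where "j = nat (- (k + 1))"
    then have "nat (-k) = Suc j" using 1 by simp
    then have g: "g = b * (b ^ j * tulap_cell b r)"
      and g': "tulap0_piece b (k + 1) r = b ^ j * tulap_cell b r"
      using 1 unfolding g_def tulap0_piece_def j_def by simp_all
    have "tulap_cell b r * (1 + b) \<le> 1" using cell assms by (simp add: le_divide_eq)
    then have "b ^ j * (tulap_cell b r * (1 + b)) \<le> 1" using p cell assms by (auto intro: mult_le_one)
    then have "g * (1 + b) \<le> b" unfolding g using assms mult_left_mono[of _ 1 b]
      by (simp add: mult.assoc)
    then have "min (g / b) (1 - b + b * g) = g / b" by (rule min_divide_affine_eq(1)[OF assms(1,2)])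
    with g g' assms show ?thesis by simp
  next
    case 2
    then have g: "g = tulap_cell b r" and g': "tulap0_piece b (k + 1) r = 1 - b + b * g"
      unfolding g_def tulap0_piece_def by (simp_all add: algebra_simps)
    have "b \<le> g * (1 + b)" using cell assms unfolding g by (simp add: divide_le_eq)
    then show ?thesis using min_divide_affine_eq(2)[OF assms(1,2)] g' by simp
  next
    case 3
    define i where "i = nat k"
    then have "nat (k + 1) = Suc i" using 3 by simp
    then have g: "1 - g = b ^ i * (1 - tulap_cell b r)"
      and g': "tulap0_piece b (k + 1) r = 1 - b + b * g"
      using 3 unfolding g_def tulap0_piece_def i_def by (simp_all add: algebra_simps)
    have "(1 - tulap_cell b r) * (1 + b) \<le> 1" using cell assms by (simp add: algebra_simps divide_le_eq)
    then have "(1 - g) * (1 + b) \<le> 1" unfolding g using p cell assms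
      by (auto simp: mult.assoc intro: mult_le_one)
    then have "b \<le> g * (1 + b)" by (simp add: algebra_simps)
    then show ?thesis using min_divide_affine_eq(2)[OF assms(1,2)] g' by simp
  qed
  then show ?thesis unfolding g_def .
qed

lemma tulap0_cdf_succ:
  assumes "0 < b" "b < 1"
  shows "tulap0_cdf 0 b (t + 1) = min (tulap0_cdf 0 b t / b) (1 - b + b * tulap0_cdf 0 b t)"
proof -
  obtain k r where r: "\<bar>r\<bar> \<le> 1/2" and t: "t = of_int k + r" by (rule int_plus_half_cases)
  have "t + 1 = of_int (k + 1) + r" using t by simp
  then show ?thesis
    using tulap0_piece_succ[OF assms r] tulap0_cdf_int_plus[OF assms r] t by metis
qed

lemma continuous_on_tulap0_piece:
  assumes "0 < b"
  shows "continuous_on A (\<lambda>t. tulap0_piece b k (t - c))"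
  unfolding tulap0_piece_def tulap_cell_def
  by (cases "k \<le> 0") (use assms in \<open>auto intro!: continuous_intros\<close>)

lemma continuous_on_tulap0_cdf_cell:
  assumes "0 < b" "b < 1"
  shows "continuous_on {real_of_int k - 1/2 .. real_of_int k + 1/2} (tulap0_cdf 0 b)"
proof -
  have eq: "tulap0_cdf 0 b t = tulap0_piece b k (t - of_int k)"
    if "t \<in> {real_of_int k - 1/2 .. real_of_int k + 1/2}" for t
  proof -
    have "\<bar>t - of_int k\<bar> \<le> 1/2" unfolding abs_le_iff using that by auto
    from tulap0_cdf_int_plus[OF assms this, of k] show ?thesis by simp
  qed
  have "continuous_on {real_of_int k - 1/2 .. real_of_int k + 1/2} (tulap0_cdf 0 b) \<longleftrightarrow>
      continuous_on {real_of_int k - 1/2 .. real_of_int k + 1/2} (\<lambda>t. tulap0_piece b k (t - of_int k))"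
    by (rule continuous_on_cong) (simp_all add: eq)
  then show ?thesis using continuous_on_tulap0_piece[OF assms(1)] by blast
qed

lemma isCont_tulap0_cdf:
  assumes "0 < b" "b < 1"
  shows "isCont (tulap0_cdf 0 b) t"
proof -
  define k where "k = \<lfloor>t\<rfloor>"
  have "continuous_on ({real_of_int k - 1/2 .. real_of_int k + 1/2} \<union>
      {real_of_int (k + 1) - 1/2 .. real_of_int (k + 1) + 1/2}) (tulap0_cdf 0 b)"
    using assms by (intro continuous_on_closed_Un continuous_on_tulap0_cdf_cell closed_atLeastAtMost)
  then have "continuous_on {real_of_int k - 1/2 <..< real_of_int (k + 1) + 1/2} (tulap0_cdf 0 b)"
    by (rule continuous_on_subset) auto
  moreover have "of_int k \<le> t" "t < of_int k + 1" unfolding k_def by linarith+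
  then have "t \<in> {real_of_int k - 1/2 <..< real_of_int (k + 1) + 1/2}" by simp
  ultimately show ?thesis by (metis continuous_on_eq_continuous_at open_greaterThanLessThan)
qed

lemma tulap0_cdf_at_bot:
  assumes "0 < b" "b < 1"
  shows "(tulap0_cdf 0 b \<longlongrightarrow> 0) at_bot"
proof (rule order_tendstoI)
  fix a :: real
  assume "a < 0"
  then have "a < tulap0_cdf 0 b t" for t using tulap0_cdf_range(1)[OF assms, of t] by linarith
  then show "eventually (\<lambda>t. a < tulap0_cdf 0 b t) at_bot" by simp
next
  fix a :: real
  assume "0 < a"
  then obtain j where j: "b ^ j < a" using real_arch_pow_inv[of a b] assms by auto
  have "tulap0_cdf 0 b t < a" if "t \<le> - real j - 1" for t
  proof -
    obtain k r where r: "\<bar>r\<bar> \<le> 1/2" and t: "t = of_int k + r" by (rule int_plus_half_cases)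
    with that have "k \<le> 0" "j \<le> nat (- k)" by linarith+
    then have "tulap0_cdf 0 b t = b ^ nat (- k) * tulap_cell b r" "b ^ nat (- k) \<le> b ^ j"
      unfolding t tulap0_cdf_int_plus[OF assms r] tulap0_piece_def
      using assms by (simp_all add: power_decreasing)
    moreover have "b ^ nat (- k) * tulap_cell b r \<le> b ^ nat (- k)"
      using tulap_cell_range[OF assms r] assms by (simp add: mult_left_le)
    ultimately show ?thesis using j by linarith
  qed
  then show "eventually (\<lambda>t. tulap0_cdf 0 b t < a) at_bot"
    by (rule eventually_at_bot_linorderI)
qed

lemma tulap0_cdf_at_top:
  assumes "0 < b" "b < 1"
  shows "(tulap0_cdf 0 b \<longlongrightarrow> 1) at_top"
proof (rule order_tendstoI)
  fix a :: real
  assume "1 < a"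
  then have "tulap0_cdf 0 b t < a" for t using tulap0_cdf_range(2)[OF assms, of t] by linarith
  then show "eventually (\<lambda>t. tulap0_cdf 0 b t < a) at_top" by simp
next
  fix a :: real
  assume "a < 1"
  then obtain j where j: "b ^ j < 1 - a" using real_arch_pow_inv[of "1 - a" b] assms by auto
  have "a < tulap0_cdf 0 b t" if "real j + 1 \<le> t" for t
  proof -
    obtain k r where r: "\<bar>r\<bar> \<le> 1/2" and t: "t = of_int k + r" by (rule int_plus_half_cases)
    with that have "0 < k" "j \<le> nat k" by linarith+
    then have "1 - tulap0_cdf 0 b t = b ^ nat k * (1 - tulap_cell b r)" "b ^ nat k \<le> b ^ j"
      unfolding t tulap0_cdf_int_plus[OF assms r] tulap0_piece_def
      using assms by (simp_all add: power_decreasing)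
    moreover have "b ^ nat k * (1 - tulap_cell b r) \<le> b ^ nat k"
      using tulap_cell_range[OF assms r] assms by (simp add: mult_left_le)
    ultimately show ?thesis using j by linarith
  qed
  then show "eventually (\<lambda>t. a < tulap0_cdf 0 b t) at_top"
    by (rule eventually_at_top_linorderI)
qed

section \<open>Differentially private tests\<close>

definition dp_cap :: "real \<Rightarrow> real \<Rightarrow> real \<Rightarrow> real" where
  "dp_cap b \<delta> p = min 1 (min (p / b + \<delta>) (1 - b * (1 - p - \<delta>)))"

lemma dp_cap_mono:
  assumes "0 < b" "p \<le> p'"
  shows "dp_cap b \<delta> p \<le> dp_cap b \<delta> p'"
proof -
  have "p / b \<le> p' / b" "b * p \<le> b * p'"
    using assms by (simp_all add: divide_right_mono mult_left_mono)
  then show ?thesis unfolding dp_cap_def by (intro min.mono) (simp_all add: algebra_simps)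
qed

lemma dp_cap_ge:
  assumes "0 < b" "b \<le> 1" "0 \<le> \<delta>" "0 \<le> p" "p \<le> 1"
  shows "p \<le> dp_cap b \<delta> p"
proof -
  have "p \<le> p / b" using assms by (simp add: le_divide_eq mult_left_le)
  moreover have "b * (1 - p - \<delta>) \<le> 1 - p"
  proof -
    have "b * (1 - p) \<le> 1 - p" "0 \<le> b * \<delta>" using assms by (simp_all add: mult_left_le_one_le)
    moreover have "b * (1 - p - \<delta>) = b * (1 - p) - b * \<delta>" by (simp add: algebra_simps)
    ultimately show ?thesis by linarith
  qed
  ultimately show ?thesis using assms unfolding dp_cap_def by simp
qed

lemma dp_cap_eq_1:
  assumes "0 < b" "b \<le> 1" "0 \<le> \<delta>" "1 \<le> p"
  shows "dp_cap b \<delta> p = 1"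
proof -
  have "1 \<le> dp_cap b \<delta> 1" using dp_cap_ge[OF assms(1-3)] by simp
  also have "\<dots> \<le> dp_cap b \<delta> p" using dp_cap_mono[OF assms(1,4)] .
  finally show ?thesis unfolding dp_cap_def by simp
qed

lemma le_dp_cap_iff:
  fixes \<epsilon> \<delta> p p' :: real
  assumes "p' \<le> 1"
  shows "p' \<le> dp_cap (exp (- \<epsilon>)) \<delta> p \<longleftrightarrow>
    p' \<le> exp \<epsilon> * p + \<delta> \<and> 1 - p \<le> exp \<epsilon> * (1 - p') + \<delta>"
proof -
  have "p / exp (- \<epsilon>) = exp \<epsilon> * p" by (simp add: exp_minus field_simps)
  moreover have "p' \<le> 1 - exp (- \<epsilon>) * (1 - p - \<delta>) \<longleftrightarrow> 1 - p \<le> exp \<epsilon> * (1 - p') + \<delta>"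
  proof -
    have "p' \<le> 1 - exp (- \<epsilon>) * (1 - p - \<delta>) \<longleftrightarrow> exp (- \<epsilon>) * (1 - p - \<delta>) \<le> 1 - p'" by linarith
    also have "\<dots> \<longleftrightarrow> 1 - p - \<delta> \<le> exp \<epsilon> * (1 - p')"
      by (simp add: exp_minus field_simps)
    finally show ?thesis by linarith
  qed
  ultimately show ?thesis using assms unfolding dp_cap_def by auto
qed

lemma DP_tests_iff_dp_cap:
  "\<phi> \<in> DP_tests n \<epsilon> \<delta> \<longleftrightarrow> is_test n \<phi> \<and>
     (\<forall>x<n. \<phi> (x + 1) \<le> dp_cap (exp (- \<epsilon>)) \<delta> (\<phi> x) \<and> \<phi> x \<le> dp_cap (exp (- \<epsilon>)) \<delta> (\<phi> (x + 1)))"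
proof -
  have "\<phi> x \<le> 1" "\<phi> (x + 1) \<le> 1" if "is_test n \<phi>" "x < n" for x
    using that unfolding is_test_def by auto
  then show ?thesis unfolding DP_tests_def by (auto simp: le_dp_cap_iff)
qed

definition DP_saturating :: "nat \<Rightarrow> real \<Rightarrow> real \<Rightarrow> (nat \<Rightarrow> real) \<Rightarrow> bool" where
  "DP_saturating n b \<delta> \<phi> \<longleftrightarrow> is_test n \<phi> \<and>
     (\<forall>x<n. \<phi> (x + 1) \<le> dp_cap b \<delta> (\<phi> x) \<and> (0 < \<phi> x \<longrightarrow> \<phi> (x + 1) = dp_cap b \<delta> (\<phi> x)))"

lemma DP_saturating_mono:
  assumes "DP_saturating n b \<delta> \<phi>" "0 < b" "b \<le> 1" "0 \<le> \<delta>" "x < n"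
  shows "\<phi> x \<le> \<phi> (x + 1)"
proof -
  have range: "0 \<le> \<phi> y" "\<phi> y \<le> 1" if "y \<le> n" for y
    using assms(1) that unfolding DP_saturating_def is_test_def by auto
  show ?thesis
  proof (cases "0 < \<phi> x")
    case True
    then have "\<phi> (x + 1) = dp_cap b \<delta> (\<phi> x)" using assms unfolding DP_saturating_def by blast
    then show ?thesis using dp_cap_ge[OF assms(2-4)] range assms(5) by simp
  next
    case False
    then show ?thesis using range[of "x + 1"] assms(5) by simp
  qed
qed

lemma DP_saturating_in_DP_tests:
  assumes "DP_saturating n (exp (- \<epsilon>)) \<delta> \<phi>" "0 \<le> \<epsilon>" "0 \<le> \<delta>"
  shows "\<phi> \<in> DP_tests n \<epsilon> \<delta>"
  unfolding DP_tests_iff_dp_cap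
proof (intro conjI allI impI)
  show "is_test n \<phi>" using assms(1) unfolding DP_saturating_def by blast
  fix x
  assume "x < n"
  then show "\<phi> (x + 1) \<le> dp_cap (exp (- \<epsilon>)) \<delta> (\<phi> x)"
    using assms(1) unfolding DP_saturating_def by blast
  have "\<phi> x \<le> \<phi> (x + 1)" using DP_saturating_mono assms \<open>x < n\<close> by simp
  also have "\<dots> \<le> dp_cap (exp (- \<epsilon>)) \<delta> (\<phi> (x + 1))"
    using \<open>x < n\<close> assms \<open>is_test n \<phi>\<close> unfolding is_test_def by (intro dp_cap_ge) auto
  finally show "\<phi> x \<le> dp_cap (exp (- \<epsilon>)) \<delta> (\<phi> (x + 1))" .
qed

lemma DP_saturating_dominates:
  assumes sat: "DP_saturating n (exp (- \<epsilon>)) \<delta> \<psi>" and "\<phi> \<in> DP_tests n \<epsilon> \<delta>"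
    and "0 \<le> \<epsilon>" "0 \<le> \<delta>"
    and "\<phi> x < \<psi> x" "x \<le> z" "z \<le> n"
  shows "\<phi> z \<le> \<psi> z"
proof -
  have "\<psi> x \<le> \<psi> z \<and> \<phi> z \<le> \<psi> z"
    using \<open>x \<le> z\<close>
  proof (induction z rule: dec_induct)
    case base
    then show ?case using \<open>\<phi> x < \<psi> x\<close> by simp
  next
    case (step k)
    then have "k < n" using \<open>z \<le> n\<close> by simp
    have "0 \<le> \<phi> x" using \<open>\<phi> \<in> DP_tests n \<epsilon> \<delta>\<close> \<open>x \<le> k\<close> \<open>k < n\<close>
      unfolding DP_tests_def is_test_def by simp
    then have "0 < \<psi> k" using step.IH \<open>\<phi> x < \<psi> x\<close> by linarith
    then have "\<psi> (k + 1) = dp_cap (exp (- \<epsilon>)) \<delta> (\<psi> k)"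
      using sat \<open>k < n\<close> unfolding DP_saturating_def by blast
    moreover have "\<phi> (k + 1) \<le> dp_cap (exp (- \<epsilon>)) \<delta> (\<phi> k)"
      using \<open>\<phi> \<in> DP_tests n \<epsilon> \<delta>\<close> \<open>k < n\<close> unfolding DP_tests_iff_dp_cap by blast
    moreover have "dp_cap (exp (- \<epsilon>)) \<delta> (\<phi> k) \<le> dp_cap (exp (- \<epsilon>)) \<delta> (\<psi> k)"
      using step.IH by (simp add: dp_cap_mono)
    moreover have "\<psi> k \<le> \<psi> (k + 1)" using DP_saturating_mono[OF sat] \<open>k < n\<close> assms by simp
    ultimately show ?case using step.IH by simp
  qed
  then show ?thesis ..
qed

section \<open>The Tulap test saturates the privacy constraints\<close>

definition clamp01 :: "real \<Rightarrow> real" where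
  "clamp01 v = max 0 (min 1 v)"

lemma isCont_clamp01: "isCont clamp01 v"
  unfolding clamp01_def by (intro continuous_intros)

lemma tulap_cdf_eq_clamp01:
  assumes "0 < b" "b < 1" "0 \<le> q" "q < 1"
  shows "tulap_cdf 0 b q t = clamp01 ((tulap0_cdf 0 b t - q/2) / (1 - q))"
proof -
  define g where "g = tulap0_cdf 0 b t"
  have "0 < 1 - q" using assms by simp
  then have "(g - q/2) / (1 - q) < 0 \<longleftrightarrow> g < q/2" "1 < (g - q/2) / (1 - q) \<longleftrightarrow> 1 - q/2 < g"
    by (auto simp: divide_less_0_iff less_divide_eq)
  then show ?thesis using assms
    unfolding tulap_cdf_def clamp01_def Let_def g_def[symmetric] by auto
qed

lemma tulap_cdf_range:
  assumes "0 < b" "b < 1" "0 \<le> q" "q < 1"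
  shows "0 \<le> tulap_cdf 0 b q t" "tulap_cdf 0 b q t \<le> 1"
  unfolding tulap_cdf_eq_clamp01[OF assms] clamp01_def by auto

lemma tulap_q_bounds:
  fixes b \<delta> q :: real
  assumes "0 < b" "b < 1" "0 \<le> \<delta>" "q = 2 * \<delta> * b / (1 - b + 2 * \<delta> * b)"
  shows "0 \<le> q" "q < 1" "q * (1 - b) = 2 * \<delta> * b * (1 - q)"
proof -
  have D: "0 < 1 - b + 2 * \<delta> * b" using assms by (simp add: add_pos_nonneg)
  show "0 \<le> q" "q < 1" using assms D by (simp_all add: divide_less_eq)
  show "q * (1 - b) = 2 * \<delta> * b * (1 - q)" using assms D by (simp add: field_simps)
qed

lemma min_diff_divide:
  fixes x y c d :: real
  assumes "0 < d"
  shows "(min x y - c) / d = min ((x - c) / d) ((y - c) / d)"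
  using assms by (auto simp: min_def divide_right_mono divide_le_cancel)

(* This is where the choice of q enters: the rescaling g |-> (g - q/2) / (1 - q) carries the two
   branches of the recursion of tulap0_cdf onto the two DP bounds collected in dp_cap. *)
lemma tulap_rescale_succ:
  fixes b q \<delta> g :: real
  assumes "0 < b" "b < 1" "q < 1" "q * (1 - b) = 2 * \<delta> * b * (1 - q)"
  defines "v \<equiv> (g - q/2) / (1 - q)"
  shows "(min (g / b) (1 - b + b * g) - q/2) / (1 - q) = min (v / b + \<delta>) (1 - b * (1 - v - \<delta>))"
proof -
  have "(g / b - q/2) / (1 - q) = v / b + \<delta>"
    using assms by (simp add: field_simps)
  moreover have "(1 - b + b * g - q/2) / (1 - q) = 1 - b * (1 - v - \<delta>)"
    using assms by (simp add: field_simps)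
  ultimately show ?thesis using assms by (simp add: min_diff_divide)
qed

lemma dp_cap_clamp01:
  assumes "0 < b" "b \<le> 1" "0 \<le> \<delta>"
  shows "max 0 (dp_cap b \<delta> v) \<le> dp_cap b \<delta> (clamp01 v)"
    and "0 < v \<Longrightarrow> max 0 (dp_cap b \<delta> v) = dp_cap b \<delta> (clamp01 v)"
proof -
  show eq: "max 0 (dp_cap b \<delta> v) = dp_cap b \<delta> (clamp01 v)" if "0 < v"
  proof (cases "1 \<le> v")
    case True
    then show ?thesis using dp_cap_eq_1[OF assms] unfolding clamp01_def by simp
  next
    case False
    then show ?thesis using that dp_cap_ge[OF assms, of v] unfolding clamp01_def by simp
  qed
  show "max 0 (dp_cap b \<delta> v) \<le> dp_cap b \<delta> (clamp01 v)"
  proof (cases "0 < v")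
    case False
    then have "clamp01 v = 0" unfolding clamp01_def by simp
    moreover have "dp_cap b \<delta> v \<le> dp_cap b \<delta> 0" using False dp_cap_mono[OF assms(1)] by simp
    ultimately show ?thesis using dp_cap_ge[OF assms, of 0] by simp
  qed (simp add: eq)
qed

lemma tulap_cdf_succ:
  assumes "0 < b" "b < 1" "0 \<le> \<delta>" "q = 2 * \<delta> * b / (1 - b + 2 * \<delta> * b)"
  shows "tulap_cdf 0 b q (t + 1) \<le> dp_cap b \<delta> (tulap_cdf 0 b q t)"
    and "0 < tulap_cdf 0 b q t \<Longrightarrow> tulap_cdf 0 b q (t + 1) = dp_cap b \<delta> (tulap_cdf 0 b q t)"
proof -
  note q = tulap_q_bounds[OF assms]
  define v where "v = (tulap0_cdf 0 b t - q/2) / (1 - q)"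
  have Ft: "tulap_cdf 0 b q t = clamp01 v"
    unfolding v_def by (rule tulap_cdf_eq_clamp01[OF assms(1,2) q(1,2)])
  have "tulap_cdf 0 b q (t + 1) = clamp01 (min (v / b + \<delta>) (1 - b * (1 - v - \<delta>)))"
    unfolding tulap_cdf_eq_clamp01[OF assms(1,2) q(1,2)] tulap0_cdf_succ[OF assms(1,2)] v_def
    using tulap_rescale_succ[OF assms(1,2) q(2,3)] by simp
  also have "\<dots> = max 0 (dp_cap b \<delta> v)" unfolding clamp01_def dp_cap_def ..
  finally have Ft1: "tulap_cdf 0 b q (t + 1) = max 0 (dp_cap b \<delta> v)" .
  have "0 < v" if "0 < clamp01 v" using that unfolding clamp01_def by simp
  then show "tulap_cdf 0 b q (t + 1) \<le> dp_cap b \<delta> (tulap_cdf 0 b q t)"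
    and "0 < tulap_cdf 0 b q t \<Longrightarrow> tulap_cdf 0 b q (t + 1) = dp_cap b \<delta> (tulap_cdf 0 b q t)"
    unfolding Ft Ft1 using dp_cap_clamp01[of b \<delta> v] assms by auto
qed

lemma isCont_tulap_cdf:
  assumes "0 < b" "b < 1" "0 \<le> q" "q < 1"
  shows "isCont (tulap_cdf 0 b q) t"
proof -
  have "isCont (\<lambda>t. clamp01 ((tulap0_cdf 0 b t - q/2) / (1 - q))) t"
    using isCont_tulap0_cdf[OF assms(1,2)] assms(4)
    by (intro continuous_intros isCont_o2[OF _ isCont_clamp01]) auto
  then show ?thesis unfolding tulap_cdf_eq_clamp01[OF assms, abs_def] .
qed

lemma tulap_cdf_at_bot:
  assumes "0 < b" "b < 1" "0 \<le> q" "q < 1"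
  shows "(tulap_cdf 0 b q \<longlongrightarrow> 0) at_bot"
proof -
  have "((\<lambda>t. clamp01 ((tulap0_cdf 0 b t - q/2) / (1 - q))) \<longlongrightarrow> clamp01 ((0 - q/2) / (1 - q))) at_bot"
    unfolding clamp01_def using tulap0_cdf_at_bot[OF assms(1,2)] assms(4)
    by (intro tendsto_intros) auto
  moreover have "(0 - q/2) / (1 - q) \<le> 0" using assms(3,4) by (intro divide_nonpos_pos) auto
  then have "clamp01 ((0 - q/2) / (1 - q)) = 0" unfolding clamp01_def by simp
  ultimately show ?thesis unfolding tulap_cdf_eq_clamp01[OF assms, abs_def] by simp
qed

lemma tulap_cdf_at_top:
  assumes "0 < b" "b < 1" "0 \<le> q" "q < 1"
  shows "(tulap_cdf 0 b q \<longlongrightarrow> 1) at_top"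
proof -
  have "((\<lambda>t. clamp01 ((tulap0_cdf 0 b t - q/2) / (1 - q))) \<longlongrightarrow> clamp01 ((1 - q/2) / (1 - q))) at_top"
    unfolding clamp01_def using tulap0_cdf_at_top[OF assms(1,2)] assms(4)
    by (intro tendsto_intros) auto
  moreover have "clamp01 ((1 - q/2) / (1 - q)) = 1"
    using assms(3,4) unfolding clamp01_def by (simp add: le_divide_eq)
  ultimately show ?thesis unfolding tulap_cdf_eq_clamp01[OF assms, abs_def] by simp
qed

lemma tulap_test_DP_saturating:
  assumes "0 < b" "b < 1" "0 \<le> \<delta>" "q = 2 * \<delta> * b / (1 - b + 2 * \<delta> * b)"
  shows "DP_saturating n b \<delta> (\<lambda>x. tulap_cdf 0 b q (real x - m))"
  unfolding DP_saturating_def is_test_def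
proof (intro conjI allI impI)
  note q = tulap_q_bounds[OF assms]
  fix x
  show "0 \<le> tulap_cdf 0 b q (real x - m)" "tulap_cdf 0 b q (real x - m) \<le> 1"
    using tulap_cdf_range[OF assms(1,2) q(1,2)] by auto
  have shift: "real (x + 1) - m = (real x - m) + 1" by simp
  show "tulap_cdf 0 b q (real (x + 1) - m) \<le> dp_cap b \<delta> (tulap_cdf 0 b q (real x - m))"
    unfolding shift by (rule tulap_cdf_succ(1)[OF assms])
  show "tulap_cdf 0 b q (real (x + 1) - m) = dp_cap b \<delta> (tulap_cdf 0 b q (real x - m))"
    if "0 < tulap_cdf 0 b q (real x - m)"
    unfolding shift by (rule tulap_cdf_succ(2)[OF assms that])
qed

section \<open>Most powerful tests\<close>

lemma sum_weighted_single_crossing_nonneg: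
  fixes w R d :: "nat \<Rightarrow> real"
  assumes w: "\<And>x. x \<le> n \<Longrightarrow> 0 \<le> w x"
    and R: "\<And>x y. x \<le> y \<Longrightarrow> y \<le> n \<Longrightarrow> R x \<le> R y" "\<And>x. x \<le> n \<Longrightarrow> 0 \<le> R x"
    and cross: "\<And>x y. x \<le> y \<Longrightarrow> y \<le> n \<Longrightarrow> 0 < d x \<Longrightarrow> 0 \<le> d y"
    and total: "0 \<le> (\<Sum>x\<le>n. w x * d x)"
  shows "0 \<le> (\<Sum>x\<le>n. w x * R x * d x)"
proof -
  obtain y where "y \<le> n" and y: "\<And>x. x \<le> n \<Longrightarrow> 0 \<le> (R x - R y) * d x"
  proof (cases "\<exists>x\<le>n. 0 < d x")
    case True
    define y where "y = (LEAST x. x \<le> n \<and> 0 < d x)"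
    have y: "y \<le> n" "0 < d y" using LeastI_ex[OF True] unfolding y_def by auto
    have below: "d x \<le> 0" if "x < y" for x
      using not_less_Least[OF that[unfolded y_def]] y that by auto
    show ?thesis
    proof (rule that[OF y(1)])
      fix x
      assume "x \<le> n"
      show "0 \<le> (R x - R y) * d x"
      proof (cases "x < y")
        case True
        then show ?thesis using below R(1)[of x y] y(1) by (simp add: mult_nonpos_nonpos)
      next
        case False
        then show ?thesis using cross[OF _ \<open>x \<le> n\<close> y(2)] R(1)[of y x] \<open>x \<le> n\<close> by simp
      qed
    qed
  next
    case False
    show ?thesis
    proof (rule that[OF order_refl])
      fix x
      assume "x \<le> n"
      then have "R x - R n \<le> 0" "d x \<le> 0" using False R(1)[of x n] by auto
      then show "0 \<le> (R x - R n) * d x" by (rule mult_nonpos_nonpos)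
    qed
  qed
  have "(\<Sum>x\<le>n. w x * R x * d x) = (\<Sum>x\<le>n. w x * ((R x - R y) * d x)) + R y * (\<Sum>x\<le>n. w x * d x)"
    by (simp add: sum_distrib_left sum.distrib[symmetric] algebra_simps)
  also have "0 \<le> \<dots>"
    using w y R(2)[OF \<open>y \<le> n\<close>] total
    by (intro add_nonneg_nonneg sum_nonneg) (simp_all add: mult_nonneg_nonneg)
  finally show ?thesis .
qed

lemma binom_power_diff:
  "binom_power n \<theta> \<psi> - binom_power n \<theta> \<phi> =
     (\<Sum>x\<le>n. real (n choose x) * \<theta> ^ x * (1 - \<theta>) ^ (n - x) * (\<psi> x - \<phi> x))"
  unfolding binom_power_def by (simp add: sum_subtractf[symmetric] algebra_simps)

lemma binom_power_mono_single_crossing: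
  assumes "0 < \<theta>0" "\<theta>0 < \<theta>1" "\<theta>1 < 1"
    and cross: "\<And>x z. x \<le> z \<Longrightarrow> z \<le> n \<Longrightarrow> \<phi> x < \<psi> x \<Longrightarrow> \<phi> z \<le> \<psi> z"
    and "binom_power n \<theta>0 \<phi> \<le> binom_power n \<theta>0 \<psi>"
  shows "binom_power n \<theta>1 \<phi> \<le> binom_power n \<theta>1 \<psi>"
proof -
  define w where "w x = real (n choose x) * \<theta>0 ^ x * (1 - \<theta>0) ^ (n - x)" for x
  define \<beta> where "\<beta> = (1 - \<theta>1) / (1 - \<theta>0)"
  define a where "a = \<theta>1 / \<theta>0"
  define R where "R x = \<beta> ^ (n - x) * a ^ x" for x
  have \<beta>: "0 \<le> \<beta>" "\<beta> \<le> 1" and a: "1 \<le> a" unfolding \<beta>_def a_def using assms(1-3) by auto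
  have w: "0 \<le> w x" for x unfolding w_def using assms(1-3) by simp
  have R_mono: "R x \<le> R y" if "x \<le> y" for x y
  proof -
    have "\<beta> ^ (n - x) \<le> \<beta> ^ (n - y)" using \<beta> that by (intro power_decreasing) auto
    moreover have "a ^ x \<le> a ^ y" using a that by (rule power_increasing[rotated])
    ultimately show ?thesis unfolding R_def using \<beta> a by (intro mult_mono) auto
  qed
  have R: "0 \<le> R x" for x unfolding R_def using \<beta> a by simp
  have "real (n choose x) * \<theta>1 ^ x * (1 - \<theta>1) ^ (n - x) = w x * R x" for x
  proof -
    have "\<theta>0 * a = \<theta>1" "(1 - \<theta>0) * \<beta> = 1 - \<theta>1" unfolding a_def \<beta>_def using assms(1-3) by simp_all
    moreover have "w x * R x = real (n choose x) * (\<theta>0 * a) ^ x * ((1 - \<theta>0) * \<beta>) ^ (n - x)"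
      unfolding w_def R_def power_mult_distrib by (simp only: ac_simps)
    ultimately show ?thesis by simp
  qed
  then have "binom_power n \<theta>1 \<psi> - binom_power n \<theta>1 \<phi> = (\<Sum>x\<le>n. w x * R x * (\<psi> x - \<phi> x))"
    unfolding binom_power_diff by simp
  also have "0 \<le> \<dots>"
  proof (rule sum_weighted_single_crossing_nonneg)
    show "0 \<le> (\<Sum>x\<le>n. w x * (\<psi> x - \<phi> x))"
      using assms(5) binom_power_diff[of n \<theta>0 \<psi> \<phi>] unfolding w_def by simp
    show "0 \<le> \<psi> z - \<phi> z" if "x \<le> z" "z \<le> n" "0 < \<psi> x - \<phi> x" for x z
      using cross[OF that(1,2)] that(3) by simp
  next
    show "0 \<le> w x" for x by (rule w)
    show "0 \<le> R x" for x by (rule R)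
    show "R x \<le> R y" if "x \<le> y" for x y using that by (rule R_mono)
  qed
  finally show ?thesis by simp
qed

lemma DP_saturating_UMP:
  assumes "0 \<le> \<epsilon>" "0 \<le> \<delta>" "0 < \<theta>0" "\<theta>0 < \<theta>1" "\<theta>1 < 1"
    and sat: "DP_saturating n (exp (- \<epsilon>)) \<delta> \<psi>" and size: "binom_power n \<theta>0 \<psi> = \<alpha>"
  shows "UMP_simple n \<theta>0 \<theta>1 \<alpha> (DP_tests n \<epsilon> \<delta>) \<psi>"
  unfolding UMP_simple_def
proof (intro conjI ballI impI)
  show "\<psi> \<in> DP_tests n \<epsilon> \<delta>" using DP_saturating_in_DP_tests[OF sat assms(1,2)] .
  show "binom_power n \<theta>0 \<psi> \<le> \<alpha>" using size by simp
  fix \<phi>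
  assume "\<phi> \<in> DP_tests n \<epsilon> \<delta>" "binom_power n \<theta>0 \<phi> \<le> \<alpha>"
  then show "binom_power n \<theta>1 \<phi> \<le> binom_power n \<theta>1 \<psi>"
    using DP_saturating_dominates[OF sat] assms size
    by (intro binom_power_mono_single_crossing[OF assms(3-5)]) auto
qed

lemma IVT_at_bot_at_top:
  fixes h :: "real \<Rightarrow> real"
  assumes "\<And>m. isCont h m" "(h \<longlongrightarrow> a) at_bot" "(h \<longlongrightarrow> c) at_top" "c < y" "y < a"
  shows "\<exists>m. h m = y"
proof -
  obtain lo where lo: "\<And>m. m \<le> lo \<Longrightarrow> y < h m"
    using order_tendstoD(1)[OF assms(2,5)] unfolding eventually_at_bot_linorder by blast
  obtain hi where hi: "\<And>m. hi \<le> m \<Longrightarrow> h m < y"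
    using order_tendstoD(2)[OF assms(3,4)] unfolding eventually_at_top_linorder by blast
  have "h (max lo hi) \<le> y" "y \<le> h (min lo hi)" "min lo hi \<le> max lo hi"
    using lo[of "min lo hi"] hi[of "max lo hi"] by auto
  then show ?thesis using IVT2[of h "max lo hi" y "min lo hi"] assms(1) by blast
qed

lemma binom_power_const: "binom_power n \<theta> (\<lambda>_. c) = c"
proof -
  have "(\<Sum>x\<le>n. real (n choose x) * \<theta> ^ x * (1 - \<theta>) ^ (n - x)) = 1"
    using binomial_ring[of \<theta> "1 - \<theta>" n] by simp
  then show ?thesis unfolding binom_power_def by (simp add: sum_distrib_right[symmetric])
qed

lemma tulap_test_size_exists:
  assumes "0 < b" "b < 1" "0 \<le> q" "q < 1" "0 < \<alpha>" "\<alpha> < 1"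
  shows "\<exists>m. binom_power n \<theta> (\<lambda>x. tulap_cdf 0 b q (real x - m)) = \<alpha>"
proof -
  let ?F = "tulap_cdf 0 b q"
  let ?h = "\<lambda>m. binom_power n \<theta> (\<lambda>x. ?F (real x - m))"
  have "isCont ?h m" for m
    unfolding binom_power_def
    by (intro continuous_intros isCont_o2[OF _ isCont_tulap_cdf[OF assms(1-4)]])
  moreover have "filterlim (\<lambda>m. real x - m) at_top at_bot" for x
    using filterlim_tendsto_add_at_top[OF tendsto_const filterlim_uminus_at_top_at_bot, of "real x"]
    by simp
  then have "(?h \<longlongrightarrow> binom_power n \<theta> (\<lambda>_. 1)) at_bot"
    unfolding binom_power_def
    by (intro tendsto_intros filterlim_compose[OF tulap_cdf_at_top[OF assms(1-4)]])
  moreover have "filterlim (\<lambda>m. - real x + m) at_top at_top" for x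
    by (rule filterlim_tendsto_add_at_top[OF tendsto_const filterlim_ident])
  then have "filterlim (\<lambda>m. real x - m) at_bot at_top" for x
    unfolding filterlim_uminus_at_bot by simp
  then have "(?h \<longlongrightarrow> binom_power n \<theta> (\<lambda>_. 0)) at_top"
    unfolding binom_power_def
    by (intro tendsto_intros filterlim_compose[OF tulap_cdf_at_bot[OF assms(1-4)]])
  ultimately show ?thesis
    using IVT_at_bot_at_top[of ?h 1 0 \<alpha>] assms(5,6) by (simp add: binom_power_const)
qed

theorem theorem4:
  fixes \<epsilon> \<delta> \<alpha> \<theta>0 \<theta>1 :: real and n :: nat
  assumes "\<epsilon> > 0" and "\<delta> \<ge> 0" and "0 < \<alpha>" and "\<alpha> < 1"
    and "0 < \<theta>0" and "\<theta>0 < \<theta>1" and "\<theta>1 < 1" and "n \<ge> 1"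
  defines "b \<equiv> exp (- \<epsilon>)"
  defines "q \<equiv> 2 * \<delta> * b / (1 - b + 2 * \<delta> * b)"
  shows "(\<exists>m. binom_power n \<theta>0 (\<lambda>x. tulap_cdf 0 b q (real x - m)) = \<alpha>)
       \<and> (\<forall>m. binom_power n \<theta>0 (\<lambda>x. tulap_cdf 0 b q (real x - m)) = \<alpha> \<longrightarrow>
             UMP_simple n \<theta>0 \<theta>1 \<alpha> (DP_tests n \<epsilon> \<delta>) (\<lambda>x. tulap_cdf 0 b q (real x - m)))"
proof -
  have b: "0 < b" "b < 1" unfolding b_def using assms(1) by auto
  have q_eq: "q = 2 * \<delta> * b / (1 - b + 2 * \<delta> * b)" unfolding q_def ..
  note q = tulap_q_bounds[OF b assms(2) q_eq]
  have "DP_saturating n (exp (- \<epsilon>)) \<delta> (\<lambda>x. tulap_cdf 0 b q (real x - m))" for m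
    unfolding b_def[symmetric] by (rule tulap_test_DP_saturating[OF b assms(2) q_eq])
  then show ?thesis
    using tulap_test_size_exists[OF b q(1,2) assms(3,4)] DP_saturating_UMP[OF _ assms(2,5-7)] assms(1)
    by auto
qed

end
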